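(* Let $(N,v)$ be a TU game with $\Pi(v)\neq\emptyset$. Then for all $(\mathbf{a},\mathcal{C})\in\Upsilon(v)$ and $(\mathbf{x},\rho)\in\Pi(v)$, $U_{\mathbf{a},\mathbf{x}}\cap F(\mathcal{C})\neq\emptyset$, i.e., there exists a player $i$ belonging to no set of $\mathcal{C}$ with $a_i>x_i$.
   Context: A TU game is a pair $(N,v)$ with $N=\{1,\dots,n\}$ and $v:2^N\to\mathbb{R}$, $v(\emptyset)=0$. $\mathcal{P}(N)$ denotes the set of partitions of $N$. A core solution is a pair $(\mathbf{x},\rho)$ with $\mathbf{x}\in\mathbb{R}^n$, $\rho\in\mathcal{P}(N)$, such that $\sum_{i\in S}x_i\ge v(S)$ for all $S\subseteq N$ and $\sum_{i\in S}x_i=v(S)$ for all $S\in\rho$; $\Pi(v)$ is the set of core solutions. $K_v=\max_{\rho\in\mathcal{P}(N)}\sum_{S\in\rho}v(S)$. A feasible environment state is a pair $(\mathbf{a},\mathcal{C})$ with $\mathbf{a}\in\mathbb{R}^n$ and $\mathcal{C}$ a set of pairwise disjoint subsets of $N$ such that $a_i\ge v(\{i\})$ for all $i\in N$ and $\sum_{i\in S}a_i\le v(S)$ for all $S\in\mathcal{C}$; $\Omega(v)$ is the set of feasible environment states. $\Upsilon(v)=\{(\mathbf{a},\mathcal{C})\in\Omega(v):\sum_{i\in N}a_i>K_v,\ \sum_{i\in S}a_i\ge v(S)\ \forall S\subseteq N\}$. For $\mathbf{a},\mathbf{x}\in\mathbb{R}^n$, $U_{\mathbf{a},\mathbf{x}}=\{i:a_i>x_i\}$.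 The banded set is $B(\mathcal{C})=\{i:\exists S\in\mathcal{C},\ i\in S\}$ and the free set is $F(\mathcal{C})=N\setminus B(\mathcal{C})$. *)

theory Defs
  imports Complex_Main "HOL-Library.Disjoint_Sets"
begin

text \<open>Players are N = {1..n}; a game is v :: nat set => real with v {} = 0.
  Payoff vectors are functions nat => real (only values on N matter).\<close>

definition players :: "nat \<Rightarrow> nat set" where
  "players n = {1..n}"

definition partitions :: "nat \<Rightarrow> nat set set set" where
  "partitions n = {\<rho>. partition_on (players n) \<rho>}"

definition core_solutions :: "nat \<Rightarrow> (nat set \<Rightarrow> real) \<Rightarrow> ((nat \<Rightarrow> real) \<times> nat set set) set" where
  "core_solutions n v = {(x, \<rho>). \<rho> \<in> partitions n \<and>
      (\<forall>S. S \<subseteq> players n \<longrightarrow> (\<Sum>i\<in>S. x i) \<ge> v S) \<and>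
      (\<forall>S\<in>\<rho>. (\<Sum>i\<in>S. x i) = v S)}"

definition K_val :: "nat \<Rightarrow> (nat set \<Rightarrow> real) \<Rightarrow> real" where
  "K_val n v = Max ((\<lambda>\<rho>. \<Sum>S\<in>\<rho>. v S) ` partitions n)"

definition feasible_states :: "nat \<Rightarrow> (nat set \<Rightarrow> real) \<Rightarrow> ((nat \<Rightarrow> real) \<times> nat set set) set" where
  "feasible_states n v = {(a, C). (\<forall>S\<in>C. S \<subseteq> players n) \<and> disjoint C \<and>
      (\<forall>i\<in>players n. a i \<ge> v {i}) \<and>
      (\<forall>S\<in>C. (\<Sum>i\<in>S. a i) \<le> v S)}"

definition Upsilon :: "nat \<Rightarrow> (nat set \<Rightarrow> real) \<Rightarrow> ((nat \<Rightarrow> real) \<times> nat set set) set" where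
  "Upsilon n v = {(a, C) \<in> feasible_states n v.
      (\<Sum>i\<in>players n. a i) > K_val n v \<and>
      (\<forall>S. S \<subseteq> players n \<longrightarrow> (\<Sum>i\<in>S. a i) \<ge> v S)}"

definition U_set :: "nat \<Rightarrow> (nat \<Rightarrow> real) \<Rightarrow> (nat \<Rightarrow> real) \<Rightarrow> nat set" where
  "U_set n a x = {i \<in> players n. a i > x i}"

definition banded :: "nat set set \<Rightarrow> nat set" where
  "banded C = {i. \<exists>S\<in>C. i \<in> S}"

definition free_set :: "nat \<Rightarrow> nat set set \<Rightarrow> nat set" where
  "free_set n C = players n - banded C"

end

theory Submission
  imports Defs
begin

text \<open>
  Suppose every free player i had a i \<le> x i. A banded coalition S receives at most v S
  under a, and at least v S under the core allocation x; so summing over the banded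
  coalitions and the free players gives a(N) \<le> x(N). But x(N) is the value of the
  partition \<rho> of a core solution, hence x(N) \<le> K_v < a(N).
\<close>

lemma sum_split_disjoint_subsets:
  assumes "finite A" "disjoint C" "\<forall>S\<in>C. S \<subseteq> A"
  shows "sum f A = sum f (A - \<Union>C) + (\<Sum>S\<in>C. sum f S)"
proof -
  have "\<Union>C \<subseteq> A" using assms(3) by blast
  then have "sum f A = sum f (A - \<Union>C) + sum f (\<Union>C)"
    using assms(1) by (simp add: sum.subset_diff)
  moreover have "sum f (\<Union>C) = (\<Sum>S\<in>C. sum f S)"
    using sum.Union_disjoint_sets[OF _ assms(2)] assms(1,3) finite_subset by fastforce
  ultimately show ?thesis by simp
qed

lemma sum_partition_on:
  assumes "finite A" "partition_on A P"
  shows "sum f A = (\<Sum>S\<in>P. sum f S)"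
  using sum_split_disjoint_subsets[OF assms(1) partition_onD2[OF assms(2)], of f]
    partition_onD1[OF assms(2)]
  by auto

lemma finite_partitions: "finite (partitions n)"
  unfolding partitions_def players_def by (simp add: finitely_many_partition_on)

lemma core_solution_total_le_K_val:
  assumes "(x, \<rho>) \<in> core_solutions n v"
  shows "sum x (players n) \<le> K_val n v"
proof -
  have \<rho>: "\<rho> \<in> partitions n" and tight: "\<forall>S\<in>\<rho>. sum x S = v S"
    using assms by (auto simp: core_solutions_def)
  have "sum x (players n) = (\<Sum>S\<in>\<rho>. sum x S)"
    using \<rho> by (intro sum_partition_on) (auto simp: players_def partitions_def)
  also have "\<dots> = (\<Sum>S\<in>\<rho>. v S)"
    using tight by simp
  also have "\<dots> \<le> K_val n v"
    unfolding K_val_def using finite_partitions \<rho> by (intro Max_ge) auto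
  finally show ?thesis .
qed

lemma feasible_total_le_if_free_dominated:
  assumes "(a, C) \<in> feasible_states n v"
    and core: "\<forall>S. S \<subseteq> players n \<longrightarrow> sum x S \<ge> v S"
    and free: "\<forall>i\<in>free_set n C. a i \<le> x i"
  shows "sum a (players n) \<le> sum x (players n)"
proof -
  have C: "\<forall>S\<in>C. S \<subseteq> players n" "disjoint C" and banded: "\<forall>S\<in>C. sum a S \<le> v S"
    using assms(1) by (auto simp: feasible_states_def)
  have fin: "finite (players n)" by (simp add: players_def)
  have "sum a (players n - \<Union>C) \<le> sum x (players n - \<Union>C)"
    using free by (intro sum_mono) (auto simp: free_set_def banded_def)
  moreover have "(\<Sum>S\<in>C. sum a S) \<le> (\<Sum>S\<in>C. sum x S)"
  proof (rule sum_mono)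
    fix S assume "S \<in> C"
    then show "sum a S \<le> sum x S"
      using banded core C(1) by (meson order_trans)
  qed
  ultimately show ?thesis
    using sum_split_disjoint_subsets[OF fin C(2,1), of a]
      sum_split_disjoint_subsets[OF fin C(2,1), of x]
    by linarith
qed

theorem proposition9:
  fixes n :: nat and v :: "nat set \<Rightarrow> real"
  assumes "v {} = 0"
    and "core_solutions n v \<noteq> {}"
    and "(a, C) \<in> Upsilon n v"
    and "(x, \<rho>) \<in> core_solutions n v"
  shows "U_set n a x \<inter> free_set n C \<noteq> {}"
proof
  assume "U_set n a x \<inter> free_set n C = {}"
  then have "\<forall>i\<in>free_set n C. a i \<le> x i"
    by (auto simp: U_set_def free_set_def not_less)
  with assms(3,4) have "sum a (players n) \<le> sum x (players n)"
    by (intro feasible_total_le_if_free_dominated) (auto simp: Upsilon_def core_solutions_def)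
  moreover have "sum a (players n) > K_val n v"
    using assms(3) by (simp add: Upsilon_def)
  ultimately show False
    using core_solution_total_le_K_val[OF assms(4)] by linarith
qed

end
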